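(* Let $\Gamma$ be any 2-agent zero-sum game in which all entries of $A=A^{(12)}$ are distinct. Then a probability measure $\pi$ on $\mathcal{X}$ is a stationary distribution of the Feller chain $\{X^t\}$ on $\mathcal{X}$ generated by Stochastic MWU if and only if $\pi$ is concentrated on pure strategy profiles (i.e., $\pi(x)>0$ only when $x$ is a pure strategy profile).
   Context: Two agents with finite pure strategy sets $\mathcal{S}_1,\mathcal{S}_2$, $\mathcal{S}=\mathcal{S}_1\times\mathcal{S}_2$, simplices $\mathcal{X}_i$ of mixed strategies, $\mathcal{X}=\mathcal{X}_1\times\mathcal{X}_2$; $A^{(12)}=A$, $A^{(21)}=-A^\top$. A pure strategy profile is $x=(e_{s_1},e_{s_2})$. The chain has kernel $P(x,\{z\})=\sum_{s\in\mathcal{S}:\,R(s,x)=z}\prod_i x_{is_i}$, where $R_{i\hat s}(s,x)=\dfrac{x_{i\hat s}\exp(\eta_i\langle e_{\hat s},A^{(ij)}e_{s_j}\rangle)}{\sum_{\bar s\in\mathcal{S}_i}x_{i\bar s}\exp(\eta_i\langle e_{\bar s},A^{(ij)}e_{s_j}\rangle)}$ ($j\ne i$, $0/0=0$) is the Stochastic MWU update after sampling pure profile $s$ from $x$. $\pi$ is stationary if $\int_{\mathcal{X}}\pi(dx)P(x,A')=\pi(A')$ for all Borel $A'\subseteq\mathcal{X}$. *)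

theory Defs
  imports "HOL-Analysis.Analysis" "HOL-Probability.Probability"
begin

text \<open>Pure strategies of agent 1: finite type 'n; of agent 2: finite type 'm.
  Mixed strategies are vectors in real^'n resp. real^'m.  The payoff matrix
  A = A^(12) has entry A$s1$s2; A^(21) = -A^T.\<close>

definition mixed_strategy :: "real^'k::finite \<Rightarrow> bool" where
  "mixed_strategy x \<longleftrightarrow> (\<forall>i. 0 \<le> x$i) \<and> (\<Sum>i\<in>UNIV. x$i) = 1"

definition profiles :: "((real^'n::finite) \<times> (real^'m::finite)) set" where
  "profiles = {x. mixed_strategy (fst x) \<and> mixed_strategy (snd x)}"

definition pure_profiles :: "((real^'n::finite) \<times> (real^'m::finite)) set" where
  "pure_profiles = {(axis s1 1, axis s2 1) | s1 s2. True}"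

text \<open>Multiplicative-weights update of a mixed strategy x with learning rate eta
  and payoff vector u (u s = payoff of pure strategy s); 0/0 = 0 by HOL division.\<close>
definition mwu_update :: "real \<Rightarrow> ('k::finite \<Rightarrow> real) \<Rightarrow> real^'k \<Rightarrow> real^'k" where
  "mwu_update eta u x =
     (\<chi> s. x$s * exp (eta * u s) / (\<Sum>t\<in>UNIV. x$t * exp (eta * u t)))"

definition smwu_step ::
  "real \<Rightarrow> real \<Rightarrow> real^'m::finite^'n::finite \<Rightarrow> 'n \<times> 'm
     \<Rightarrow> (real^'n) \<times> (real^'m) \<Rightarrow> (real^'n) \<times> (real^'m)" where
  "smwu_step eta1 eta2 A s x =
     (mwu_update eta1 (\<lambda>t. A$t$(snd s)) (fst x),
      mwu_update eta2 (\<lambda>t. - (A$(fst s)$t)) (snd x))"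

definition smwu_kernel ::
  "real \<Rightarrow> real \<Rightarrow> real^'m::finite^'n::finite
     \<Rightarrow> (real^'n) \<times> (real^'m) \<Rightarrow> ((real^'n) \<times> (real^'m)) set \<Rightarrow> real" where
  "smwu_kernel eta1 eta2 A x B =
     (\<Sum>s\<in>UNIV. (fst x)$(fst s) * (snd x)$(snd s) * indicator B (smwu_step eta1 eta2 A s x))"

definition smwu_stationary ::
  "real \<Rightarrow> real \<Rightarrow> real^'m::finite^'n::finite
     \<Rightarrow> ((real^'n) \<times> (real^'m)) measure \<Rightarrow> bool" where
  "smwu_stationary eta1 eta2 A \<pi> \<longleftrightarrow>
     (\<forall>B \<in> sets borel.
        (\<integral>\<^sup>+ x. ennreal (smwu_kernel eta1 eta2 A x B) \<partial>\<pi>) = emeasure \<pi> B)"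

end

theory Submission
  imports Defs
begin

text \<open>
  Pure profiles are fixed points of the update, so a measure concentrated on them is stationary.
  Conversely, fix supports \<open>S1, S2\<close>, not both singletons, and let \<open>C\<close> be the set of
  profiles whose supports are exactly \<open>S1\<close> and \<open>S2\<close>; the update preserves \<open>C\<close>. Take a
  saddle point \<open>(p, q)\<close> of the subgame on \<open>S1 \<times> S2\<close> in which agent 1 minimises, and let
  \<open>\<Psi> x = - (\<Sum>i. p i ln x1 i) / \<eta>1 - (\<Sum>j. q j ln x2 j) / \<eta>2\<close>. One step decreases \<open>\<Psi>\<close>
  by at most a constant, and its expected increment is the sum of two Jensen gaps of
  \<open>ln \<Sum> x exp\<close> and of \<open>x1 A q - p A x2 \<ge> 0\<close>; distinct entries of \<open>A\<close> make one of the
  gaps strictly positive. A Lyapunov argument (truncation of \<open>\<Psi>\<close> and Fatou's lemma) then shows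
  that a stationary \<pi> gives \<open>C\<close> measure zero.
\<close>

lemma mixed_strategy_nonneg: "mixed_strategy x \<Longrightarrow> 0 \<le> x$i"
  by (simp add: mixed_strategy_def)

lemma mixed_strategy_sum: "mixed_strategy x \<Longrightarrow> (\<Sum>i\<in>UNIV. x$i) = 1"
  by (simp add: mixed_strategy_def)

lemma mixed_strategy_le_one:
  assumes "mixed_strategy x" shows "x$i \<le> 1"
  using member_le_sum[of i UNIV "\<lambda>i. x$i"] assms by (simp add: mixed_strategy_def)

lemma mixed_strategy_ex_pos:
  assumes "mixed_strategy x" obtains i where "0 < x$i"
proof -
  have "\<exists>i. x$i \<noteq> 0"
  proof (rule ccontr)
    assume "\<not> ?thesis"
    then show False
      using assms by (simp add: mixed_strategy_def)
  qed
  then show ?thesis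
    using assms that by (metis less_eq_real_def mixed_strategy_nonneg)
qed

lemma mixed_strategy_eq_axis:
  assumes "mixed_strategy x" and "\<And>i. 0 < x$i \<Longrightarrow> i = a"
  shows "x = axis a 1"
proof -
  have zero: "x$i = 0" if "i \<noteq> a" for i
    using assms that by (metis less_eq_real_def mixed_strategy_nonneg)
  then have "(\<Sum>i\<in>UNIV. x$i) = x$a"
    by (simp add: sum.remove[of UNIV a] sum.neutral)
  then show ?thesis
    using zero assms(1) by (auto simp: vec_eq_iff axis_def mixed_strategy_def)
qed

lemma mixed_strategy_axis: "mixed_strategy (axis a 1)"
  by (simp add: mixed_strategy_def axis_def)

lemma abs_mean_le:
  assumes "mixed_strategy x" "\<And>i. \<bar>c i\<bar> \<le> B"
  shows "\<bar>\<Sum>i\<in>UNIV. x$i * c i\<bar> \<le> B"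
proof -
  have "\<bar>\<Sum>i\<in>UNIV. x$i * c i\<bar> \<le> (\<Sum>i\<in>UNIV. x$i * B)"
    using assms by (auto simp: abs_mult mixed_strategy_nonneg intro!: order.trans[OF sum_abs] sum_mono mult_left_mono)
  then show ?thesis
    using assms(1) by (simp add: mixed_strategy_sum flip: sum_distrib_right)
qed

lemma mean_le_of_support:
  assumes "mixed_strategy x" "\<And>i. 0 < x$i \<Longrightarrow> c i \<le> w"
  shows "(\<Sum>i\<in>UNIV. x$i * c i) \<le> w"
proof -
  have "x$i * c i \<le> x$i * w" for i
    using assms mixed_strategy_nonneg[OF assms(1), of i] by (cases "x$i = 0") auto
  then have "(\<Sum>i\<in>UNIV. x$i * c i) \<le> (\<Sum>i\<in>UNIV. x$i * w)"
    by (intro sum_mono)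
  then show ?thesis
    using assms(1) by (simp add: mixed_strategy_sum flip: sum_distrib_right)
qed

lemma mean_pos:
  assumes "mixed_strategy x" "\<And>i. 0 < c i"
  shows "0 < (\<Sum>i\<in>UNIV. x$i * c i)"
proof -
  obtain i where "0 < x$i"
    using assms(1) by (rule mixed_strategy_ex_pos)
  then show ?thesis
    using assms by (intro sum_pos2[of UNIV i]) (auto simp: mixed_strategy_nonneg less_imp_le)
qed

lemma ex_support_mean_le:
  assumes "mixed_strategy x"
  obtains i where "0 < x$i" "(\<Sum>j\<in>UNIV. x$j * c j) \<le> c i"
proof (rule ccontr)
  assume "\<not> thesis"
  then have below: "0 < x$i \<Longrightarrow> c i < (\<Sum>j\<in>UNIV. x$j * c j)" for i
    using that by fastforce
  obtain i0 where "0 < x$i0"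
    using assms by (rule mixed_strategy_ex_pos)
  have "x$i * c i \<le> x$i * (\<Sum>j\<in>UNIV. x$j * c j)" for i
    using below[of i] mixed_strategy_nonneg[OF assms, of i] by (cases "x$i = 0") auto
  moreover have "x$i0 * c i0 < x$i0 * (\<Sum>j\<in>UNIV. x$j * c j)"
    using below \<open>0 < x$i0\<close> by simp
  ultimately have "(\<Sum>i\<in>UNIV. x$i * c i) < (\<Sum>i\<in>UNIV. x$i * (\<Sum>j\<in>UNIV. x$j * c j))"
    by (intro sum_strict_mono_ex1) auto
  then show False
    using assms by (simp add: mixed_strategy_sum flip: sum_distrib_right)
qed

definition strategy_support :: "real^'k::finite \<Rightarrow> 'k set" where
  "strategy_support x = {i. 0 < x$i}"

lemma strategy_support_nonempty: "mixed_strategy x \<Longrightarrow> strategy_support x \<noteq> {}"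
  by (auto simp: strategy_support_def elim: mixed_strategy_ex_pos)

section \<open>Multiplicative weights\<close>

lemma mwu_update_nth:
  "mwu_update e u x $ s = x$s * exp (e * u s) / (\<Sum>t\<in>UNIV. x$t * exp (e * u t))"
  by (simp add: mwu_update_def)

lemma mwu_normalizer_pos:
  assumes "mixed_strategy x" shows "0 < (\<Sum>t\<in>UNIV. x$t * exp (e * u t))"
  using assms by (rule mean_pos) simp

lemma mixed_strategy_mwu_update:
  assumes "mixed_strategy x" shows "mixed_strategy (mwu_update e u x)"
  using mwu_normalizer_pos[OF assms, of e u] assms
  by (simp add: mixed_strategy_def mwu_update_nth flip: sum_divide_distrib)

lemma mwu_update_pos_iff:
  assumes "mixed_strategy x" shows "0 < mwu_update e u x $ s \<longleftrightarrow> 0 < x$s"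
  using mwu_normalizer_pos[OF assms, of e u]
  by (simp add: mwu_update_nth zero_less_divide_iff zero_less_mult_iff)

lemma mwu_update_axis: "mwu_update e u (axis a 1) = axis a 1"
proof -
  have "(\<Sum>t\<in>UNIV. axis a 1 $ t * exp (e * u t)) = exp (e * u a)"
    by (subst sum.remove[of UNIV a]) (auto simp: axis_def)
  then show ?thesis
    by (simp add: vec_eq_iff mwu_update_nth) (simp add: axis_def)
qed

definition log_partition :: "real \<Rightarrow> ('k::finite \<Rightarrow> real) \<Rightarrow> real^'k \<Rightarrow> real" where
  "log_partition e u x = ln (\<Sum>t\<in>UNIV. x$t * exp (e * u t)) / e"

lemma sum_ln_mwu_update:
  assumes "e \<noteq> 0" and x: "mixed_strategy x"
    and p: "(\<Sum>i\<in>UNIV. p i) = 1" "\<And>i. p i \<noteq> 0 \<Longrightarrow> 0 < x$i"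
  shows "(\<Sum>i\<in>UNIV. p i * ln (mwu_update e u x $ i))
    = (\<Sum>i\<in>UNIV. p i * ln (x$i)) + e * ((\<Sum>i\<in>UNIV. p i * u i) - log_partition e u x)"
proof -
  let ?Z = "\<Sum>t\<in>UNIV. x$t * exp (e * u t)"
  have "p i * ln (mwu_update e u x $ i) = p i * ln (x$i) + e * (p i * u i) - p i * ln ?Z" for i
    using p(2)[of i] mwu_normalizer_pos[OF x, of e u]
    by (cases "p i = 0") (auto simp: mwu_update_nth ln_div ln_mult algebra_simps)
  then show ?thesis
    using p(1) assms(1)
    by (simp add: log_partition_def sum.distrib sum_subtractf sum_distrib_left right_diff_distrib
        flip: sum_distrib_right)
qed

lemma add_one_less_exp:
  fixes y :: real assumes "y \<noteq> 0" shows "1 + y < exp y"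
proof -
  have "1 + y \<noteq> exp y"
    using ln_eq_minus_one[of "exp y"] assms by auto
  then show ?thesis
    using exp_ge_add_one_self[of y] by linarith
qed

lemma sum_exp_eq_exp_mean:
  fixes a :: "'k::finite \<Rightarrow> real"
  assumes "mixed_strategy x"
  defines "m \<equiv> \<Sum>i\<in>UNIV. x$i * a i"
  shows "(\<Sum>i\<in>UNIV. x$i * exp (a i)) = exp m * (1 + (\<Sum>i\<in>UNIV. x$i * (exp (a i - m) - 1 - (a i - m))))"
proof -
  have "(\<Sum>i\<in>UNIV. x$i * (exp (a i - m) - 1 - (a i - m)))
      = (\<Sum>i\<in>UNIV. x$i * exp (a i - m)) - (\<Sum>i\<in>UNIV. x$i) - (\<Sum>i\<in>UNIV. x$i * a i) + m * (\<Sum>i\<in>UNIV. x$i)"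
    by (simp add: algebra_simps sum.distrib sum_subtractf sum_distrib_left)
  then show ?thesis
    using assms(1) by (simp add: m_def mixed_strategy_sum sum_distrib_left exp_diff algebra_simps)
qed

lemma mean_le_ln_sum_exp:
  assumes "mixed_strategy x"
  shows "(\<Sum>i\<in>UNIV. x$i * a i) \<le> ln (\<Sum>i\<in>UNIV. x$i * exp (a i))"
proof -
  define m where "m = (\<Sum>i\<in>UNIV. x$i * a i)"
  have "0 \<le> x$i * (exp (a i - m) - 1 - (a i - m))" for i
    using exp_ge_add_one_self[of "a i - m"] mixed_strategy_nonneg[OF assms, of i]
    by (intro mult_nonneg_nonneg) linarith+
  then have "0 \<le> (\<Sum>i\<in>UNIV. x$i * (exp (a i - m) - 1 - (a i - m)))"
    by (intro sum_nonneg)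
  then show ?thesis
    unfolding sum_exp_eq_exp_mean[OF assms] m_def[symmetric]
    by (simp add: ln_mult)
qed

lemma mean_less_ln_sum_exp:
  assumes "mixed_strategy x" "0 < x$i" "0 < x$k" "a i \<noteq> a k"
  shows "(\<Sum>i\<in>UNIV. x$i * a i) < ln (\<Sum>i\<in>UNIV. x$i * exp (a i))"
proof -
  define m where "m = (\<Sum>i\<in>UNIV. x$i * a i)"
  obtain j where j: "0 < x$j" "a j \<noteq> m"
    using assms(2-4) by metis
  have "0 < (\<Sum>i\<in>UNIV. x$i * (exp (a i - m) - 1 - (a i - m)))"
  proof (rule sum_pos2[of UNIV j])
    show "0 < x$j * (exp (a j - m) - 1 - (a j - m))"
      using j add_one_less_exp[of "a j - m"] by simp
    show "0 \<le> x$i * (exp (a i - m) - 1 - (a i - m))" for i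
      using exp_ge_add_one_self[of "a i - m"] mixed_strategy_nonneg[OF assms(1), of i]
      by (intro mult_nonneg_nonneg) linarith+
  qed simp_all
  then show ?thesis
    unfolding sum_exp_eq_exp_mean[OF assms(1)] m_def[symmetric]
    by (simp add: ln_mult)
qed

lemma mean_le_log_partition:
  assumes "0 < e" "mixed_strategy x"
  shows "(\<Sum>i\<in>UNIV. x$i * u i) \<le> log_partition e u x"
  using mean_le_ln_sum_exp[OF assms(2), of "\<lambda>i. e * u i"] assms(1)
  by (simp add: log_partition_def pos_le_divide_eq sum_distrib_left mult_ac)

lemma mean_less_log_partition:
  assumes "0 < e" "mixed_strategy x" "0 < x$i" "0 < x$k" "u i \<noteq> u k"
  shows "(\<Sum>i\<in>UNIV. x$i * u i) < log_partition e u x"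
  using mean_less_ln_sum_exp[OF assms(2-4), of "\<lambda>i. e * u i"] assms(1,5)
  by (simp add: log_partition_def pos_less_divide_eq sum_distrib_left mult_ac)

section \<open>A minimax theorem with prescribed supports\<close>

definition simplex_on :: "'i::finite set \<Rightarrow> (real^'i) set" where
  "simplex_on S = {p. mixed_strategy p \<and> (\<forall>i. i \<notin> S \<longrightarrow> p$i = 0)}"

lemma axis_in_simplex_on: "a \<in> S \<Longrightarrow> axis a 1 \<in> simplex_on S"
  by (simp add: simplex_on_def mixed_strategy_axis) (simp add: axis_def)

lemma simplex_on_nonempty: "S \<noteq> {} \<Longrightarrow> simplex_on S \<noteq> {}"
  using axis_in_simplex_on by blast

lemma simplex_on_imp_nonempty: "p \<in> simplex_on S \<Longrightarrow> S \<noteq> {}"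
  by (auto simp: simplex_on_def elim: mixed_strategy_ex_pos)

lemma compact_simplex_on: "compact (simplex_on S)"
proof (rule compact_eq_bounded_closed[THEN iffD2], intro conjI)
  show "bounded (simplex_on S)"
  proof (rule boundedI)
    fix p :: "real^'a" assume "p \<in> simplex_on S"
    then show "norm p \<le> 1"
      using norm_le_l1_cart[of p] by (simp add: simplex_on_def mixed_strategy_def)
  qed
  have "simplex_on S = (\<Inter>i. {p. 0 \<le> p$i}) \<inter> (\<Inter>i\<in>-S. {p. p$i = 0}) \<inter> {p. (\<Sum>i\<in>UNIV. p$i) = 1}"
    by (auto simp: simplex_on_def mixed_strategy_def)
  also have "closed \<dots>"
    by (intro closed_Int closed_INT ballI closed_Collect_le closed_Collect_eq continuous_intros)
  finally show "closed (simplex_on S)" .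
qed

lemma convex_simplex_on: "convex (simplex_on S)"
  unfolding convex_def simplex_on_def mixed_strategy_def
  by (auto simp: sum.distrib simp flip: sum_distrib_left)

definition nash_update :: "'i::finite set \<Rightarrow> ('i \<Rightarrow> real) \<Rightarrow> real^'i \<Rightarrow> real^'i" where
  "nash_update S g p = (\<chi> i. if i \<in> S then (p$i + g i) / (1 + (\<Sum>k\<in>S. g k)) else 0)"

lemma nash_update_simplex_on:
  assumes p: "p \<in> simplex_on S" and g: "\<And>i. 0 \<le> g i"
  shows "nash_update S g p \<in> simplex_on S"
proof -
  have denom: "0 < 1 + (\<Sum>k\<in>S. g k)"
    using sum_nonneg[of S g] g by (simp add: add_pos_nonneg)
  have "(\<Sum>i\<in>S. p$i) = (\<Sum>i\<in>UNIV. p$i)"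
    using p by (intro sum.mono_neutral_left) (auto simp: simplex_on_def)
  then have "(\<Sum>i\<in>S. p$i + g i) = 1 + (\<Sum>k\<in>S. g k)"
    using p by (simp add: sum.distrib simplex_on_def mixed_strategy_def)
  then show ?thesis
    using p g denom
    by (auto simp: simplex_on_def mixed_strategy_def nash_update_def sum.If_cases
        simp flip: sum_divide_distrib intro!: divide_nonneg_pos add_nonneg_nonneg)
qed

lemma continuous_on_nash_update:
  assumes "continuous_on X P" "\<And>i. continuous_on X (\<lambda>z. G z i)" "\<And>z i. 0 \<le> G z i"
  shows "continuous_on X (\<lambda>z. nash_update S (G z) (P z))"
proof -
  have "0 < 1 + (\<Sum>k\<in>S. G z k)" for z
    using sum_nonneg[of S "G z"] assms(3) by (simp add: add_pos_nonneg)
  then have "continuous_on X (\<lambda>z. (P z $ i + G z i) / (1 + (\<Sum>k\<in>S. G z k)))" for i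
    using assms(1,2) by (intro continuous_intros) (auto simp: less_imp_neq[symmetric])
  then have "continuous_on X (\<lambda>z. if i \<in> S then (P z $ i + G z i) / (1 + (\<Sum>k\<in>S. G z k)) else 0)" for i
    by (cases "i \<in> S") auto
  then show ?thesis
    unfolding nash_update_def by (rule continuous_on_vec_lambda)
qed

lemma nash_update_fixed_point:
  assumes p: "p \<in> simplex_on S" and fixed: "nash_update S (\<lambda>i. max 0 (v - c$i)) p = p"
    and payoff: "p \<bullet> c = v"
  shows "\<forall>i\<in>S. v \<le> c$i"
proof -
  define T where "T = (\<Sum>k\<in>S. max 0 (v - c$k))"
  have T: "p$i * T = max 0 (v - c$i)" if "i \<in> S" for i
  proof -
    have "0 < 1 + T"
      using sum_nonneg[of S "\<lambda>k. max 0 (v - c$k)"] by (simp add: T_def add_pos_nonneg)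
    moreover have "(p$i + max 0 (v - c$i)) / (1 + T) = p$i"
      using that arg_cong[OF fixed, of "\<lambda>p. p$i"] by (simp add: nash_update_def T_def)
    ultimately show ?thesis
      by (simp add: field_simps)
  qed
  obtain i where "0 < p$i" "v \<le> c$i"
    using ex_support_mean_le[of p "\<lambda>i. c$i"] p payoff by (auto simp: simplex_on_def inner_vec_def)
  moreover have "i \<in> S"
    using p \<open>0 < p$i\<close> by (auto simp: simplex_on_def)
  ultimately have "T = 0"
    using T[of i] by simp
  then show ?thesis
    using T by (force simp: max_def split: if_splits)
qed

text \<open>
  Nash's argument: Brouwer's theorem gives a fixed point of the improvement maps, which is a
  saddle point. Agent 1 minimises; agent 2 is treated as minimising the negated payoffs.
\<close>

lemma minimax_on_supports:
  fixes A :: "real^'m::finite^'n::finite"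
  assumes "S1 \<noteq> {}" "S2 \<noteq> {}"
  obtains p q w where "p \<in> simplex_on S1" "q \<in> simplex_on S2"
    "\<And>j. j \<in> S2 \<Longrightarrow> (p v* A)$j \<le> w" "\<And>i. i \<in> S1 \<Longrightarrow> w \<le> (A *v q)$i"
proof -
  define v where "v z = fst z \<bullet> (A *v snd z)" for z :: "(real^'n) \<times> (real^'m)"
  define F where "F z = (nash_update S1 (\<lambda>i. max 0 (v z - (A *v snd z)$i)) (fst z),
      nash_update S2 (\<lambda>j. max 0 (- v z - (- (fst z v* A))$j)) (snd z))" for z
  let ?K = "simplex_on S1 \<times> simplex_on S2"
  have "compact ?K" "convex ?K" "?K \<noteq> {}"
    using assms by (simp_all add: compact_Times compact_simplex_on convex_Times convex_simplex_on simplex_on_nonempty)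
  moreover have "continuous_on ?K F"
    unfolding F_def v_def
    by (intro continuous_on_Pair continuous_on_nash_update)
      (auto simp: matrix_vector_mult_def vector_matrix_mult_def inner_vec_def intro!: continuous_intros)
  moreover have "F \<in> ?K \<rightarrow> ?K"
    by (auto simp: F_def intro!: nash_update_simplex_on)
  ultimately obtain z where "z \<in> ?K" "F z = z"
    by (rule brouwer)
  then obtain p q where pq: "p \<in> simplex_on S1" "q \<in> simplex_on S2" "F (p, q) = (p, q)"
    by (cases z) auto
  have "\<forall>i\<in>S1. v (p, q) \<le> (A *v q)$i"
    using pq by (intro nash_update_fixed_point[of p]) (simp_all add: F_def v_def)
  moreover have "\<forall>j\<in>S2. - v (p, q) \<le> (- (p v* A))$j"
    using pq by (intro nash_update_fixed_point[of q])
      (simp_all add: F_def v_def dot_lmul_matrix[symmetric] inner_commute)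
  ultimately show ?thesis
    using pq by (intro that[of p q "v (p, q)"]) auto
qed

section \<open>Stationary measures of random maps\<close>

lemma mixture_stationary_nn_integral:
  fixes T :: "'s::finite \<Rightarrow> 'a \<Rightarrow> 'a" and w :: "'a \<Rightarrow> 's \<Rightarrow> real"
  assumes T[measurable]: "\<And>s. T s \<in> M \<rightarrow>\<^sub>M M"
    and w[measurable]: "\<And>s. (\<lambda>x. w x s) \<in> borel_measurable M"
    and w_nonneg: "AE x in M. \<forall>s. 0 \<le> w x s"
    and stationary: "\<And>B. B \<in> sets M \<Longrightarrow>
      (\<integral>\<^sup>+x. ennreal (\<Sum>s\<in>UNIV. w x s * indicator B (T s x)) \<partial>M) = emeasure M B"
    and f: "f \<in> borel_measurable M"
  shows "(\<integral>\<^sup>+x. (\<Sum>s\<in>UNIV. ennreal (w x s) * f (T s x)) \<partial>M) = (\<integral>\<^sup>+x. f x \<partial>M)"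
  using f
proof (induction rule: borel_measurable_induct)
  case (cong f g)
  have "(\<Sum>s\<in>UNIV. ennreal (w x s) * f (T s x)) = (\<Sum>s\<in>UNIV. ennreal (w x s) * g (T s x))"
    if "x \<in> space M" for x
    using cong.hyps(3) measurable_space[OF T that] by simp
  then show ?case
    using cong.IH cong.hyps(3) by (metis (no_types, lifting) nn_integral_cong)
next
  case (set B)
  have "(\<Sum>s\<in>UNIV. ennreal (w x s) * indicator B (T s x))
      = ennreal (\<Sum>s\<in>UNIV. w x s * indicator B (T s x))" if "\<forall>s. 0 \<le> w x s" for x
    using that by (simp add: ennreal_mult' ennreal_indicator sum_ennreal)
  then have "(\<integral>\<^sup>+x. (\<Sum>s\<in>UNIV. ennreal (w x s) * indicator B (T s x)) \<partial>M)
      = (\<integral>\<^sup>+x. ennreal (\<Sum>s\<in>UNIV. w x s * indicator B (T s x)) \<partial>M)"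
    using w_nonneg by (intro nn_integral_cong_AE) (auto elim!: eventually_mono)
  also have "\<dots> = emeasure M B"
    using set by (rule stationary)
  also have "\<dots> = (\<integral>\<^sup>+x. indicator B x \<partial>M)"
    using set by simp
  finally show ?case .
next
  case (mult u c)
  have "(\<integral>\<^sup>+x. (\<Sum>s\<in>UNIV. ennreal (w x s) * (c * u (T s x))) \<partial>M)
      = (\<integral>\<^sup>+x. c * (\<Sum>s\<in>UNIV. ennreal (w x s) * u (T s x)) \<partial>M)"
    by (simp add: sum_distrib_left mult.left_commute)
  also have "\<dots> = c * (\<integral>\<^sup>+x. u x \<partial>M)"
    using mult by (simp add: nn_integral_cmult)
  also have "\<dots> = (\<integral>\<^sup>+x. c * u x \<partial>M)"
    using mult by (simp add: nn_integral_cmult)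
  finally show ?case .
next
  case (add u v)
  then show ?case
    by (simp add: distrib_left sum.distrib nn_integral_add)
next
  case (seq U)
  have "(\<Sum>s\<in>UNIV. ennreal (w x s) * (SUP i. U i) (T s x))
      = (SUP i. \<Sum>s\<in>UNIV. ennreal (w x s) * U i (T s x))" for x
  proof -
    have "incseq (\<lambda>i. ennreal (w x s) * U i (T s x))" for s
      using seq.hyps(3) by (auto simp: incseq_def le_fun_def intro!: mult_left_mono)
    then show ?thesis
      by (simp add: ennreal_SUP_sum SUP_mult_left_ennreal SUP_apply image_image)
  qed
  then have "(\<integral>\<^sup>+x. (\<Sum>s\<in>UNIV. ennreal (w x s) * (SUP i. U i) (T s x)) \<partial>M)
      = (\<integral>\<^sup>+x. (SUP i. \<Sum>s\<in>UNIV. ennreal (w x s) * U i (T s x)) \<partial>M)"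
    by simp
  also have "\<dots> = (SUP i. \<integral>\<^sup>+x. (\<Sum>s\<in>UNIV. ennreal (w x s) * U i (T s x)) \<partial>M)"
    using seq.hyps
    by (intro nn_integral_monotone_convergence_SUP)
      (auto simp: incseq_def le_fun_def intro!: sum_mono mult_left_mono)
  also have "\<dots> = (\<integral>\<^sup>+x. (SUP i. U i x) \<partial>M)"
    using seq by (simp add: nn_integral_monotone_convergence_SUP)
  also have "\<dots> = (\<integral>\<^sup>+x. (SUP i. U i) x \<partial>M)"
    by (simp add: SUP_apply image_image)
  finally show ?case .
qed

locale positive_drift = prob_space M for M :: "'a measure" +
  fixes T :: "'s::finite \<Rightarrow> 'a \<Rightarrow> 'a" and w :: "'a \<Rightarrow> 's \<Rightarrow> real"
    and C :: "'a set" and V :: "'a \<Rightarrow> real" and K :: real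
  assumes T_measurable[measurable]: "\<And>s. T s \<in> M \<rightarrow>\<^sub>M M"
    and w_measurable[measurable]: "\<And>s. (\<lambda>x. w x s) \<in> borel_measurable M"
    and C_sets[measurable]: "C \<in> sets M"
    and V_measurable[measurable]: "V \<in> borel_measurable M"
    and stationary: "\<And>f. f \<in> borel_measurable M \<Longrightarrow>
      (\<integral>\<^sup>+x. (\<Sum>s\<in>UNIV. ennreal (w x s) * f (T s x)) \<partial>M) = (\<integral>\<^sup>+x. f x \<partial>M)"
    and w_nonneg: "\<And>x s. x \<in> C \<Longrightarrow> 0 \<le> w x s"
    and w_sum: "\<And>x. x \<in> C \<Longrightarrow> (\<Sum>s\<in>UNIV. w x s) = 1"
    and invariant: "\<And>x s. x \<in> C \<Longrightarrow> T s x \<in> C"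
    and V_nonneg: "\<And>x. x \<in> C \<Longrightarrow> 0 \<le> V x"
    and K_nonneg: "0 \<le> K"
    and V_decrease_le: "\<And>x s. x \<in> C \<Longrightarrow> V x - K \<le> V (T s x)"
    and drift_pos: "\<And>x. x \<in> C \<Longrightarrow> V x < (\<Sum>s\<in>UNIV. w x s * V (T s x))"
begin

text \<open>
  \<open>V\<close> need not be integrable, hence the truncations \<open>min V m\<close>: by stationarity the integral
  of the truncated gain is at most \<open>K \<cdot> M C\<close>, and Fatou's lemma as \<open>m \<rightarrow> \<infinity>\<close>
  contradicts the positive drift unless \<open>M C = 0\<close>.
\<close>

definition truncated :: "real \<Rightarrow> 'a \<Rightarrow> ennreal" where
  "truncated m x = indicator C x * ennreal (min (V x) m)"

definition truncated_gain :: "real \<Rightarrow> 'a \<Rightarrow> ennreal" where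
  "truncated_gain m x =
     indicator C x * ennreal ((\<Sum>s\<in>UNIV. w x s * min (V (T s x)) m) - min (V x) m + K)"

lemma borel_measurable_truncated[measurable]:
  "truncated m \<in> borel_measurable M" "truncated_gain m \<in> borel_measurable M"
  unfolding truncated_def truncated_gain_def by measurable

lemma truncated_gain_add_le:
  assumes "0 \<le> m"
  shows "truncated_gain m x + truncated m x
    \<le> (\<Sum>s\<in>UNIV. ennreal (w x s) * truncated m (T s x)) + ennreal K * indicator C x"
proof (cases "x \<in> C")
  case True
  define a where "a = (\<Sum>s\<in>UNIV. w x s * min (V (T s x)) m)"
  define b where "b = min (V x) m"
  have "b - K \<le> a"
  proof -
    have "b - K \<le> min (V (T s x)) m" for s
      using K_nonneg V_decrease_le[OF True, of s] by (auto simp: b_def)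
    then have "(\<Sum>s\<in>UNIV. w x s * (b - K)) \<le> a"
      unfolding a_def using True by (intro sum_mono mult_left_mono) (auto simp: w_nonneg)
    then show ?thesis
      using True by (simp add: w_sum flip: sum_distrib_right)
  qed
  moreover have "0 \<le> b" "0 \<le> a"
    using True assms by (auto simp: a_def b_def V_nonneg w_nonneg invariant intro!: sum_nonneg)
  moreover have "(\<Sum>s\<in>UNIV. ennreal (w x s) * truncated m (T s x)) = ennreal a"
    using True assms unfolding a_def truncated_def
    by (subst sum_ennreal[symmetric])
      (auto simp: invariant w_nonneg V_nonneg ennreal_mult' intro!: sum.cong)
  ultimately show ?thesis
    using True K_nonneg by (simp add: truncated_def truncated_gain_def a_def b_def flip: ennreal_plus)
qed (simp add: truncated_def truncated_gain_def)

lemma nn_integral_truncated_gain_le: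
  assumes "0 \<le> m"
  shows "(\<integral>\<^sup>+x. truncated_gain m x \<partial>M) \<le> ennreal K * emeasure M C"
proof -
  have "(\<integral>\<^sup>+x. truncated m x \<partial>M) + (\<integral>\<^sup>+x. truncated_gain m x \<partial>M)
      = (\<integral>\<^sup>+x. truncated_gain m x + truncated m x \<partial>M)"
    by (simp add: nn_integral_add add.commute)
  also have "\<dots> \<le> (\<integral>\<^sup>+x. (\<Sum>s\<in>UNIV. ennreal (w x s) * truncated m (T s x)) + ennreal K * indicator C x \<partial>M)"
    using assms by (intro nn_integral_mono truncated_gain_add_le)
  also have "\<dots> = (\<integral>\<^sup>+x. truncated m x \<partial>M) + ennreal K * emeasure M C"
    by (simp add: nn_integral_add nn_integral_cmult_indicator stationary)
  finally have "(\<integral>\<^sup>+x. truncated m x \<partial>M) + (\<integral>\<^sup>+x. truncated_gain m x \<partial>M)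
      \<le> (\<integral>\<^sup>+x. truncated m x \<partial>M) + ennreal K * emeasure M C" .
  moreover have "(\<integral>\<^sup>+x. truncated m x \<partial>M) \<le> (\<integral>\<^sup>+x. m \<partial>M)"
    by (intro nn_integral_mono) (auto simp: truncated_def indicator_def ennreal_leI)
  ultimately show ?thesis
    by (auto simp: ennreal_add_left_cancel_le top_unique emeasure_space_1)
qed

lemma liminf_truncated_gain:
  "liminf (\<lambda>n. truncated_gain (real n) x)
    = indicator C x * ennreal ((\<Sum>s\<in>UNIV. w x s * V (T s x)) - V x + K)"
proof (cases "x \<in> C")
  case True
  have "\<forall>\<^sub>F n in sequentially. V x \<le> real n \<and> (\<forall>s. V (T s x) \<le> real n)"
    using filterlim_real_sequentially
    by (auto simp: filterlim_at_top intro!: eventually_conj eventually_all_finite)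
  then have "\<forall>\<^sub>F n in sequentially. truncated_gain (real n) x
      = indicator C x * ennreal ((\<Sum>s\<in>UNIV. w x s * V (T s x)) - V x + K)"
    by eventually_elim (simp add: truncated_gain_def)
  then show ?thesis
    by (intro lim_imp_Liminf tendsto_eventually) simp_all
qed (simp add: truncated_gain_def Liminf_const)

theorem emeasure_eq_0: "emeasure M C = 0"
proof (rule ccontr)
  assume "emeasure M C \<noteq> 0"
  define D where "D x = (\<Sum>s\<in>UNIV. w x s * V (T s x)) - V x" for x
  have less: "ennreal K * indicator C x < indicator C x * ennreal (D x + K)" if "x \<in> C" for x
    using drift_pos[OF that] K_nonneg that by (simp add: D_def ennreal_less_iff)
  have "ennreal K * emeasure M C = (\<integral>\<^sup>+x. ennreal K * indicator C x \<partial>M)"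
    by (simp add: nn_integral_cmult_indicator)
  also have "\<dots> < (\<integral>\<^sup>+x. indicator C x * ennreal (D x + K) \<partial>M)"
  proof (rule nn_integral_less)
    show "(\<integral>\<^sup>+x. ennreal K * indicator C x \<partial>M) \<noteq> \<infinity>"
      by (simp add: nn_integral_cmult_indicator ennreal_mult_eq_top_iff)
    show "AE x in M. ennreal K * indicator C x \<le> indicator C x * ennreal (D x + K)"
      using less by (auto simp: indicator_def less_imp_le)
    show "\<not> (AE x in M. indicator C x * ennreal (D x + K) \<le> ennreal K * indicator C x)"
    proof
      assume "AE x in M. indicator C x * ennreal (D x + K) \<le> ennreal K * indicator C x"
      then have "AE x in M. x \<notin> C"
        using less by (auto elim!: eventually_mono simp: not_le[symmetric])
      with \<open>emeasure M C \<noteq> 0\<close> show False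
        using sets.sets_into_space[OF C_sets] by (subst (asm) AE_iff_measurable[OF C_sets]) auto
    qed
  qed (simp_all add: D_def)
  also have "\<dots> = (\<integral>\<^sup>+x. liminf (\<lambda>n. truncated_gain (real n) x) \<partial>M)"
    by (simp add: liminf_truncated_gain D_def)
  also have "\<dots> \<le> liminf (\<lambda>n. \<integral>\<^sup>+x. truncated_gain (real n) x \<partial>M)"
    by (rule nn_integral_liminf) simp
  also have "\<dots> \<le> ennreal K * emeasure M C"
    using nn_integral_truncated_gain_le by (intro Liminf_le always_eventually) simp_all
  finally show False
    by simp
qed

end

definition profiles_with_support :: "'n::finite set \<Rightarrow> 'm::finite set \<Rightarrow> ((real^'n) \<times> (real^'m)) set" where
  "profiles_with_support S1 S2 =
     {x \<in> profiles. strategy_support (fst x) = S1 \<and> strategy_support (snd x) = S2}"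

lemma profiles_with_supportD:
  assumes "x \<in> profiles_with_support S1 S2"
  shows "x \<in> profiles" "mixed_strategy (fst x)" "mixed_strategy (snd x)"
    "0 < fst x $ i \<longleftrightarrow> i \<in> S1" "0 < snd x $ j \<longleftrightarrow> j \<in> S2"
  using assms by (auto simp: profiles_with_support_def profiles_def strategy_support_def)

lemma smwu_step_in_profiles_with_support:
  "x \<in> profiles_with_support S1 S2 \<Longrightarrow> smwu_step eta1 eta2 A s x \<in> profiles_with_support S1 S2"
  by (auto simp: profiles_with_support_def profiles_def strategy_support_def smwu_step_def
      mixed_strategy_mwu_update mwu_update_pos_iff)

definition profile_weight :: "(real^'n::finite) \<times> (real^'m::finite) \<Rightarrow> 'n \<times> 'm \<Rightarrow> real" where
  "profile_weight x s = fst x $ fst s * snd x $ snd s"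

lemma profile_weight_nonneg: "x \<in> profiles \<Longrightarrow> 0 \<le> profile_weight x s"
  by (simp add: profile_weight_def profiles_def mixed_strategy_nonneg)

lemma sum_profile_weight_separable:
  assumes "x \<in> profiles"
  shows "(\<Sum>s\<in>UNIV. profile_weight x s * (f (fst s) + g (snd s)))
    = (\<Sum>a\<in>UNIV. fst x $ a * f a) + (\<Sum>b\<in>UNIV. snd x $ b * g b)"
proof -
  have pairs: "(\<Sum>s\<in>UNIV. h s) = (\<Sum>a\<in>UNIV. \<Sum>b\<in>UNIV. h (a, b))" for h :: "'a \<times> 'b \<Rightarrow> real"
    by (subst sum.cartesian_product) simp
  have "(\<Sum>s\<in>UNIV. profile_weight x s * (f (fst s) + g (snd s)))
      = (\<Sum>a\<in>UNIV. \<Sum>b\<in>UNIV. fst x $ a * snd x $ b * f a + fst x $ a * (snd x $ b * g b))"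
    unfolding pairs by (simp add: profile_weight_def algebra_simps)
  also have "\<dots> = (\<Sum>a\<in>UNIV. fst x $ a * f a * (\<Sum>b\<in>UNIV. snd x $ b))
      + (\<Sum>a\<in>UNIV. fst x $ a * (\<Sum>b\<in>UNIV. snd x $ b * g b))"
    by (simp add: sum.distrib sum_distrib_left mult_ac)
  finally show ?thesis
    using assms by (simp add: profiles_def mixed_strategy_sum flip: sum_distrib_right)
qed

lemma sum_profile_weight: "x \<in> profiles \<Longrightarrow> (\<Sum>s\<in>UNIV. profile_weight x s) = 1"
  using sum_profile_weight_separable[of x "\<lambda>_. 1" "\<lambda>_. 0"]
  by (simp add: profiles_def mixed_strategy_sum)

lemma borel_measurable_fst_vec_nth[measurable]:
  "(\<lambda>x::(real^'n::finite) \<times> (real^'m::finite). fst x $ i) \<in> borel_measurable borel"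
  by (intro borel_measurable_continuous_onI continuous_intros)

lemma borel_measurable_snd_vec_nth[measurable]:
  "(\<lambda>x::(real^'n::finite) \<times> (real^'m::finite). snd x $ i) \<in> borel_measurable borel"
  by (intro borel_measurable_continuous_onI continuous_intros)

lemma borel_measurable_vec_lambda:
  assumes "\<And>i. (\<lambda>x. f x i) \<in> borel_measurable M"
  shows "(\<lambda>x. (\<chi> i. f x i)::real^'n::finite) \<in> borel_measurable M"
  by (subst borel_measurable_euclidean_space) (auto simp: Basis_vec_def inner_axis assms)

lemma borel_measurable_mwu_update[measurable]:
  "(\<lambda>x. mwu_update e u (x::real^'k::finite)) \<in> borel_measurable borel"
  unfolding mwu_update_def by (intro borel_measurable_vec_lambda) measurable

lemma borel_measurable_smwu_step[measurable]:
  "smwu_step eta1 eta2 A s \<in> borel_measurable borel"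
  unfolding smwu_step_def
  by (intro borel_measurable_Pair measurable_compose[OF _ borel_measurable_mwu_update]
      borel_measurable_continuous_onI continuous_intros)

lemma borel_measurable_profile_weight[measurable]:
  "(\<lambda>x. profile_weight x s) \<in> borel_measurable borel"
  unfolding profile_weight_def by measurable

lemma profiles_borel[measurable]: "profiles \<in> sets borel"
  unfolding profiles_def mixed_strategy_def by measurable

lemma profiles_with_support_borel[measurable]: "profiles_with_support S1 S2 \<in> sets borel"
  unfolding profiles_with_support_def strategy_support_def set_eq_iff mem_Collect_eq by measurable

lemma smwu_stationary_nn_integral:
  assumes stationary: "smwu_stationary eta1 eta2 A \<pi>" and borel: "sets \<pi> = sets borel"
    and on_profiles: "AE x in \<pi>. x \<in> profiles" and f: "f \<in> borel_measurable \<pi>"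
  shows "(\<integral>\<^sup>+x. (\<Sum>s\<in>UNIV. ennreal (profile_weight x s) * f (smwu_step eta1 eta2 A s x)) \<partial>\<pi>)
    = (\<integral>\<^sup>+x. f x \<partial>\<pi>)"
proof (rule mixture_stationary_nn_integral[OF _ _ _ _ f])
  show "smwu_step eta1 eta2 A s \<in> \<pi> \<rightarrow>\<^sub>M \<pi>" for s
    by (simp add: measurable_cong_sets[OF borel borel])
  show "(\<lambda>x. profile_weight x s) \<in> borel_measurable \<pi>" for s
    by (simp add: measurable_cong_sets[OF borel refl])
  show "AE x in \<pi>. \<forall>s. 0 \<le> profile_weight x s"
    using on_profiles by (auto elim!: eventually_mono simp: profile_weight_nonneg)
  show "(\<integral>\<^sup>+x. ennreal (\<Sum>s\<in>UNIV. profile_weight x s * indicator B (smwu_step eta1 eta2 A s x)) \<partial>\<pi>)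
      = emeasure \<pi> B" if "B \<in> sets \<pi>" for B
    using stationary that borel by (simp add: smwu_stationary_def smwu_kernel_def profile_weight_def)
qed

lemma pure_profiles_subset: "pure_profiles \<subseteq> profiles"
  by (auto simp: pure_profiles_def profiles_def mixed_strategy_axis)

lemma smwu_step_pure: "x \<in> pure_profiles \<Longrightarrow> smwu_step eta1 eta2 A s x = x"
  by (auto simp: pure_profiles_def smwu_step_def mwu_update_axis)

lemma smwu_kernel_pure: "x \<in> pure_profiles \<Longrightarrow> smwu_kernel eta1 eta2 A x B = indicator B x"
  using sum_profile_weight[of x] pure_profiles_subset
  by (auto simp: smwu_kernel_def smwu_step_pure simp flip: profile_weight_def sum_distrib_right)

lemma pure_profiles_borel: "(pure_profiles :: ((real^'n::finite) \<times> (real^'m::finite)) set) \<in> sets borel"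
proof -
  have "(pure_profiles :: ((real^'n) \<times> (real^'m)) set) = (\<lambda>(a, b). (axis a 1, axis b 1)) ` UNIV"
    by (auto simp: pure_profiles_def)
  then have "finite (pure_profiles :: ((real^'n) \<times> (real^'m)) set)"
    by (metis finite finite_imageI)
  then show ?thesis
    by (intro borel_closed finite_imp_closed)
qed

lemma in_pure_profiles_if_singleton_supports:
  assumes "x \<in> profiles" "is_singleton (strategy_support (fst x))" "is_singleton (strategy_support (snd x))"
  shows "x \<in> pure_profiles"
proof -
  obtain a b where "strategy_support (fst x) = {a}" "strategy_support (snd x) = {b}"
    using assms(2,3) by (auto simp: is_singleton_def)
  then have "fst x = axis a 1" "snd x = axis b 1"
    using assms(1) by (auto simp: profiles_def strategy_support_def intro!: mixed_strategy_eq_axis)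
  then show ?thesis
    by (auto simp: pure_profiles_def prod_eq_iff)
qed

section \<open>A Lyapunov function on profiles with prescribed supports\<close>

lemma abs_entry_le_sum_abs:
  "\<bar>A$i$j\<bar> \<le> (\<Sum>i\<in>UNIV. \<Sum>j\<in>UNIV. \<bar>(A::real^'m::finite^'n::finite)$i$j\<bar>)"
proof -
  have "\<bar>A$i$j\<bar> \<le> (\<Sum>j\<in>UNIV. \<bar>A$i$j\<bar>)"
    by (rule member_le_sum) auto
  also have "\<dots> \<le> (\<Sum>i\<in>UNIV. \<Sum>j\<in>UNIV. \<bar>A$i$j\<bar>)"
    by (rule member_le_sum[where f = "\<lambda>i. \<Sum>j\<in>UNIV. \<bar>A$i$j\<bar>"]) (auto intro: sum_nonneg)
  finally show ?thesis .
qed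

text \<open>
  \<open>(p, q)\<close> is a saddle point of the subgame on \<open>S1 \<times> S2\<close> in which agent 1 \<^emph>\<open>minimises\<close>
  \<open>x \<bullet> (A *v y)\<close>. With this orientation the bilinear part \<open>x1 \<bullet> (A *v q) - (p v* A) \<bullet> x2\<close>
  of the expected Lyapunov increment is nonnegative.
\<close>

locale subgame_saddle =
  fixes eta1 eta2 :: real and A :: "real^'m::finite^'n::finite"
    and S1 :: "'n set" and S2 :: "'m set" and p :: "real^'n" and q :: "real^'m" and w :: real
  assumes eta_pos: "0 < eta1" "0 < eta2"
    and distinct_entries: "inj (\<lambda>(i, j). A$i$j)"
    and p: "p \<in> simplex_on S1" and q: "q \<in> simplex_on S2"
    and p_saddle: "\<And>j. j \<in> S2 \<Longrightarrow> (p v* A)$j \<le> w"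
    and q_saddle: "\<And>i. i \<in> S1 \<Longrightarrow> w \<le> (A *v q)$i"
    and not_pure: "\<not> is_singleton S1 \<or> \<not> is_singleton S2"
begin

text \<open>
  Up to an additive constant this is \<open>KL(p \<parallel> x1) / \<eta>1 + KL(q \<parallel> x2) / \<eta>2\<close>. The junk value
  \<open>ln 0 = 0\<close> is harmless: \<open>p\<close> and \<open>q\<close> vanish outside the supports of the profiles considered.
\<close>

definition lyapunov :: "(real^'n) \<times> (real^'m) \<Rightarrow> real" where
  "lyapunov x = - (\<Sum>i\<in>UNIV. p$i * ln (fst x $ i)) / eta1 - (\<Sum>j\<in>UNIV. q$j * ln (snd x $ j)) / eta2"

definition lyapunov_increment :: "(real^'n) \<times> (real^'m) \<Rightarrow> 'n \<times> 'm \<Rightarrow> real" where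
  "lyapunov_increment x s =
     log_partition eta1 (\<lambda>i. A$i$snd s) (fst x) - (p v* A)$snd s
     + log_partition eta2 (\<lambda>j. - A$fst s$j) (snd x) + (A *v q)$fst s"

lemma profiles_with_support_pos:
  assumes "x \<in> profiles_with_support S1 S2"
  shows "p$i \<noteq> 0 \<Longrightarrow> 0 < fst x $ i" "q$j \<noteq> 0 \<Longrightarrow> 0 < snd x $ j"
  using profiles_with_supportD(4,5)[OF assms] p q by (auto simp: simplex_on_def)

lemma lyapunov_nonneg:
  assumes x: "x \<in> profiles_with_support S1 S2"
  shows "0 \<le> lyapunov x"
proof -
  note mixed = profiles_with_supportD(2,3)[OF x]
  have "p$i * ln (fst x $ i) \<le> 0" for i
    using profiles_with_support_pos(1)[OF x, of i] mixed_strategy_le_one[OF mixed(1), of i] p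
    by (cases "p$i = 0") (auto simp: simplex_on_def mixed_strategy_nonneg mult_nonneg_nonpos)
  moreover have "q$j * ln (snd x $ j) \<le> 0" for j
    using profiles_with_support_pos(2)[OF x, of j] mixed_strategy_le_one[OF mixed(2), of j] q
    by (cases "q$j = 0") (auto simp: simplex_on_def mixed_strategy_nonneg mult_nonneg_nonpos)
  ultimately have "(\<Sum>i\<in>UNIV. p$i * ln (fst x $ i)) / eta1 \<le> 0" "(\<Sum>j\<in>UNIV. q$j * ln (snd x $ j)) / eta2 \<le> 0"
    using eta_pos by (simp_all add: divide_nonpos_pos sum_nonpos)
  then show ?thesis
    by (simp add: lyapunov_def)
qed

lemma lyapunov_step:
  assumes x: "x \<in> profiles_with_support S1 S2"
  shows "lyapunov (smwu_step eta1 eta2 A s x) = lyapunov x + lyapunov_increment x s"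
proof -
  note mixed = profiles_with_supportD(2,3)[OF x]
  have player1: "(\<Sum>i\<in>UNIV. p$i * ln (fst (smwu_step eta1 eta2 A s x) $ i))
      = (\<Sum>i\<in>UNIV. p$i * ln (fst x $ i)) + eta1 * ((p v* A)$snd s - log_partition eta1 (\<lambda>i. A$i$snd s) (fst x))"
    using sum_ln_mwu_update[OF _ mixed(1), of eta1 "\<lambda>i. p$i" "\<lambda>i. A$i$snd s"] profiles_with_support_pos(1)[OF x] p eta_pos
    by (simp add: smwu_step_def vector_matrix_mult_def simplex_on_def mixed_strategy_sum)
  have player2: "(\<Sum>j\<in>UNIV. q$j * ln (snd (smwu_step eta1 eta2 A s x) $ j))
      = (\<Sum>j\<in>UNIV. q$j * ln (snd x $ j)) + eta2 * (- (A *v q)$fst s - log_partition eta2 (\<lambda>j. - A$fst s$j) (snd x))"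
    using sum_ln_mwu_update[OF _ mixed(2), of eta2 "\<lambda>j. q$j" "\<lambda>j. - A$fst s$j"] profiles_with_support_pos(2)[OF x] q eta_pos
    by (simp add: smwu_step_def matrix_vector_mult_def simplex_on_def mixed_strategy_sum sum_negf mult.commute)
  show ?thesis
    unfolding lyapunov_def player1 player2
    using eta_pos by (simp add: lyapunov_increment_def field_simps)
qed

lemma lyapunov_increment_ge:
  assumes x: "x \<in> profiles"
  shows "- (4 * (\<Sum>i\<in>UNIV. \<Sum>j\<in>UNIV. \<bar>A$i$j\<bar>)) \<le> lyapunov_increment x s"
proof -
  define B where "B = (\<Sum>i\<in>UNIV. \<Sum>j\<in>UNIV. \<bar>A$i$j\<bar>)"
  have entry: "\<bar>A$i$j\<bar> \<le> B" "\<bar>- A$i$j\<bar> \<le> B" for i j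
    using abs_entry_le_sum_abs[of A i j] by (simp_all add: B_def)
  have mixed: "mixed_strategy (fst x)" "mixed_strategy (snd x)" "mixed_strategy p" "mixed_strategy q"
    using x p q by (auto simp: profiles_def simplex_on_def)
  have "- B \<le> log_partition eta1 (\<lambda>i. A$i$snd s) (fst x)"
    using abs_mean_le[OF mixed(1), of "\<lambda>i. A$i$snd s" B] entry
      mean_le_log_partition[OF eta_pos(1) mixed(1), of "\<lambda>i. A$i$snd s"]
    by (simp add: abs_le_iff)
  moreover have "- B \<le> log_partition eta2 (\<lambda>j. - A$fst s$j) (snd x)"
    using abs_mean_le[OF mixed(2), of "\<lambda>j. - A$fst s$j" B] entry
      mean_le_log_partition[OF eta_pos(2) mixed(2), of "\<lambda>j. - A$fst s$j"]
    by (simp add: abs_le_iff)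
  moreover have "(p v* A)$snd s \<le> B"
    using abs_mean_le[OF mixed(3), of "\<lambda>i. A$i$snd s" B] entry
    by (simp add: vector_matrix_mult_def abs_le_iff)
  moreover have "- B \<le> (A *v q)$fst s"
    using abs_mean_le[OF mixed(4), of "\<lambda>j. A$fst s$j" B] entry
    by (simp add: matrix_vector_mult_def abs_le_iff mult.commute)
  ultimately show ?thesis
    by (simp add: lyapunov_increment_def B_def)
qed

lemma expected_lyapunov_increment_eq:
  assumes "x \<in> profiles"
  shows "(\<Sum>s\<in>UNIV. profile_weight x s * lyapunov_increment x s)
    = (\<Sum>b\<in>UNIV. snd x $ b * (log_partition eta1 (\<lambda>i. A$i$b) (fst x) - (fst x v* A)$b))
      + (\<Sum>a\<in>UNIV. fst x $ a * (log_partition eta2 (\<lambda>j. - A$a$j) (snd x) + (A *v snd x)$a))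
      + (fst x \<bullet> (A *v q) - (p v* A) \<bullet> snd x)"
proof -
  define y z where "y = fst x" and "z = snd x"
  define gap1 where "gap1 b = log_partition eta1 (\<lambda>i. A$i$b) y - (y v* A)$b" for b
  define gap2 where "gap2 a = log_partition eta2 (\<lambda>j. - A$a$j) z + (A *v z)$a" for a
  have "lyapunov_increment x s = (gap2 (fst s) - (A *v z)$fst s + (A *v q)$fst s)
      + (gap1 (snd s) + (y v* A)$snd s - (p v* A)$snd s)" for s
    by (simp add: lyapunov_increment_def gap1_def gap2_def y_def z_def)
  then have "(\<Sum>s\<in>UNIV. profile_weight x s * lyapunov_increment x s)
      = (\<Sum>a\<in>UNIV. y$a * (gap2 a - (A *v z)$a + (A *v q)$a))
        + (\<Sum>b\<in>UNIV. z$b * (gap1 b + (y v* A)$b - (p v* A)$b))"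
    using sum_profile_weight_separable[OF assms] by (simp add: y_def z_def)
  also have "\<dots> = (\<Sum>a\<in>UNIV. y$a * gap2 a) - y \<bullet> (A *v z) + y \<bullet> (A *v q)
      + (\<Sum>b\<in>UNIV. z$b * gap1 b) + (y v* A) \<bullet> z - (p v* A) \<bullet> z"
    by (simp add: inner_vec_def distrib_left right_diff_distrib sum.distrib sum_subtractf ac_simps)
  finally show ?thesis
    by (simp add: dot_lmul_matrix gap1_def gap2_def y_def z_def)
qed

lemma jensen_gaps_pos:
  assumes x: "x \<in> profiles_with_support S1 S2"
  shows "0 < (\<Sum>b\<in>UNIV. snd x $ b * (log_partition eta1 (\<lambda>i. A$i$b) (fst x) - (fst x v* A)$b))
      + (\<Sum>a\<in>UNIV. fst x $ a * (log_partition eta2 (\<lambda>j. - A$a$j) (snd x) + (A *v snd x)$a))"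
    (is "0 < (\<Sum>b\<in>UNIV. snd x $ b * ?gap1 b) + (\<Sum>a\<in>UNIV. fst x $ a * ?gap2 a)")
proof -
  note y = profiles_with_supportD(2)[OF x] and z = profiles_with_supportD(3)[OF x]
    and supp = profiles_with_supportD(4,5)[OF x]
  have gap1_nonneg: "0 \<le> ?gap1 b" for b
    using mean_le_log_partition[OF eta_pos(1) y, of "\<lambda>i. A$i$b"]
    by (simp add: vector_matrix_mult_def)
  have gap2_nonneg: "0 \<le> ?gap2 a" for a
    using mean_le_log_partition[OF eta_pos(2) z, of "\<lambda>j. - A$a$j"]
    by (simp add: matrix_vector_mult_def sum_negf mult.commute)
  show ?thesis
    using not_pure
  proof
    assume "\<not> is_singleton S1"
    then obtain i k where "i \<in> S1" "k \<in> S1" "i \<noteq> k"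
      using simplex_on_imp_nonempty[OF p] by (meson is_singletonI')
    then have "0 < ?gap1 b" for b
      using mean_less_log_partition[OF eta_pos(1) y, of i k "\<lambda>i. A$i$b"] distinct_entries supp
      by (auto simp: vector_matrix_mult_def inj_def)
    then show ?thesis
      using mean_pos[OF z] gap2_nonneg mixed_strategy_nonneg[OF y]
      by (simp add: add_pos_nonneg sum_nonneg)
  next
    assume "\<not> is_singleton S2"
    then obtain j l where "j \<in> S2" "l \<in> S2" "j \<noteq> l"
      using simplex_on_imp_nonempty[OF q] by (meson is_singletonI')
    moreover have "A$a$j \<noteq> A$a$l" if "j \<noteq> l" for a
      using that distinct_entries by (auto simp: inj_def)
    ultimately have "0 < ?gap2 a" for a
      using mean_less_log_partition[OF eta_pos(2) z, of j l "\<lambda>j. - A$a$j"] supp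
      by (simp add: matrix_vector_mult_def sum_negf mult.commute)
    then show ?thesis
      using mean_pos[OF y] gap1_nonneg mixed_strategy_nonneg[OF z]
      by (simp add: add_nonneg_pos sum_nonneg)
  qed
qed

lemma saddle_payoff_le:
  assumes x: "x \<in> profiles_with_support S1 S2"
  shows "(p v* A) \<bullet> snd x \<le> fst x \<bullet> (A *v q)"
proof -
  note y = profiles_with_supportD(2)[OF x] and z = profiles_with_supportD(3)[OF x]
    and supp = profiles_with_supportD(4,5)[OF x]
  have "(p v* A) \<bullet> snd x \<le> w"
    using mean_le_of_support[OF z, of "\<lambda>j. (p v* A)$j"] p_saddle supp
    by (simp add: inner_vec_def mult.commute)
  also have "w \<le> fst x \<bullet> (A *v q)"
    using mean_le_of_support[OF y, of "\<lambda>i. - (A *v q)$i" "- w"] q_saddle supp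
    by (simp add: inner_vec_def sum_negf)
  finally show ?thesis .
qed

lemma expected_lyapunov_increment_pos:
  assumes x: "x \<in> profiles_with_support S1 S2"
  shows "0 < (\<Sum>s\<in>UNIV. profile_weight x s * lyapunov_increment x s)"
  using expected_lyapunov_increment_eq[OF profiles_with_supportD(1)[OF x]]
    jensen_gaps_pos[OF x] saddle_payoff_le[OF x]
  by simp

lemma borel_measurable_lyapunov[measurable]: "lyapunov \<in> borel_measurable borel"
  unfolding lyapunov_def by measurable

lemma emeasure_profiles_with_support_eq_0:
  assumes stationary: "smwu_stationary eta1 eta2 A \<pi>" and "prob_space \<pi>"
    and borel: "sets \<pi> = sets borel" and on_profiles: "AE x in \<pi>. x \<in> profiles"
  shows "emeasure \<pi> (profiles_with_support S1 S2) = 0"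
proof -
  interpret positive_drift \<pi> "\<lambda>s. smwu_step eta1 eta2 A s" profile_weight "profiles_with_support S1 S2"
    lyapunov "4 * (\<Sum>i\<in>UNIV. \<Sum>j\<in>UNIV. \<bar>A$i$j\<bar>)"
  proof (intro positive_drift.intro positive_drift_axioms.intro)
    show "prob_space \<pi>" by fact
    show "smwu_step eta1 eta2 A s \<in> \<pi> \<rightarrow>\<^sub>M \<pi>" for s
      by (simp add: measurable_cong_sets[OF borel borel])
    show "(\<lambda>x. profile_weight x s) \<in> borel_measurable \<pi>" "lyapunov \<in> borel_measurable \<pi>" for s
      by (simp_all add: measurable_cong_sets[OF borel refl])
    show "profiles_with_support S1 S2 \<in> sets \<pi>"
      by (simp add: borel)
    show "(\<integral>\<^sup>+x. (\<Sum>s\<in>UNIV. ennreal (profile_weight x s) * f (smwu_step eta1 eta2 A s x)) \<partial>\<pi>)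
        = (\<integral>\<^sup>+x. f x \<partial>\<pi>)" if "f \<in> borel_measurable \<pi>" for f
      using smwu_stationary_nn_integral[OF stationary borel on_profiles that] .
    show "0 \<le> 4 * (\<Sum>i\<in>UNIV. \<Sum>j\<in>UNIV. \<bar>A$i$j\<bar>)"
      by (simp add: sum_nonneg)
    fix x s assume x: "x \<in> profiles_with_support S1 S2"
    then have xp: "x \<in> profiles"
      by (rule profiles_with_supportD)
    show "0 \<le> profile_weight x s" "(\<Sum>s\<in>UNIV. profile_weight x s) = 1"
      using xp by (simp_all add: profile_weight_nonneg sum_profile_weight)
    show "smwu_step eta1 eta2 A s x \<in> profiles_with_support S1 S2" "0 \<le> lyapunov x"
      using x by (simp_all add: smwu_step_in_profiles_with_support lyapunov_nonneg)
    show "lyapunov x - 4 * (\<Sum>i\<in>UNIV. \<Sum>j\<in>UNIV. \<bar>A$i$j\<bar>) \<le> lyapunov (smwu_step eta1 eta2 A s x)"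
      using lyapunov_step[OF x, of s] lyapunov_increment_ge[OF xp, of s] by linarith
    have "(\<Sum>s\<in>UNIV. profile_weight x s * lyapunov (smwu_step eta1 eta2 A s x))
        = lyapunov x + (\<Sum>s\<in>UNIV. profile_weight x s * lyapunov_increment x s)"
      using sum_profile_weight[OF xp]
      by (simp add: lyapunov_step[OF x] distrib_left sum.distrib flip: sum_distrib_right)
    then show "lyapunov x < (\<Sum>s\<in>UNIV. profile_weight x s * lyapunov (smwu_step eta1 eta2 A s x))"
      using expected_lyapunov_increment_pos[OF x] by linarith
  qed
  show ?thesis
    by (rule emeasure_eq_0)
qed

end

lemma emeasure_mixed_support_eq_0:
  fixes A :: "real^'m::finite^'n::finite"
  assumes "0 < eta1" "0 < eta2" "inj (\<lambda>(i, j). A$i$j)"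
    and "smwu_stationary eta1 eta2 A \<pi>" "prob_space \<pi>" "sets \<pi> = sets borel" "AE x in \<pi>. x \<in> profiles"
    and nonempty: "S1 \<noteq> {}" "S2 \<noteq> {}" and not_pure: "\<not> is_singleton S1 \<or> \<not> is_singleton S2"
  shows "emeasure \<pi> (profiles_with_support S1 S2) = 0"
proof -
  obtain p q w where "p \<in> simplex_on S1" "q \<in> simplex_on S2"
    "\<And>j. j \<in> S2 \<Longrightarrow> (p v* A)$j \<le> w" "\<And>i. i \<in> S1 \<Longrightarrow> w \<le> (A *v q)$i"
    using minimax_on_supports[OF nonempty, of A] by blast
  then interpret subgame_saddle eta1 eta2 A S1 S2 p q w
    using assms(1-3) not_pure by unfold_locales
  show ?thesis
    using assms(4-7) by (rule emeasure_profiles_with_support_eq_0)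
qed

lemma AE_pure_profiles_if_smwu_stationary:
  fixes A :: "real^'m::finite^'n::finite"
  assumes "0 < eta1" "0 < eta2" "inj (\<lambda>(i, j). A$i$j)"
    and "smwu_stationary eta1 eta2 A \<pi>" "prob_space \<pi>" and borel: "sets \<pi> = sets borel"
    and on_profiles: "AE x in \<pi>. x \<in> profiles"
  shows "AE x in \<pi>. x \<in> pure_profiles"
proof -
  let ?mixed = "{(S1, S2). S1 \<noteq> {} \<and> S2 \<noteq> {} \<and> (\<not> is_singleton S1 \<or> \<not> is_singleton S2)}"
  have "AE x in \<pi>. x \<notin> profiles_with_support S1 S2" if "(S1, S2) \<in> ?mixed" for S1 S2
    using emeasure_mixed_support_eq_0[OF assms] that borel by (intro AE_not_in null_setsI) auto
  then have "AE x in \<pi>. \<forall>(S1, S2)\<in>?mixed. x \<notin> profiles_with_support S1 S2"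
    by (intro AE_finite_allI) auto
  then show ?thesis
    using on_profiles
  proof eventually_elim
    case (elim x)
    let ?S1 = "strategy_support (fst x)" and ?S2 = "strategy_support (snd x)"
    have "x \<in> profiles_with_support ?S1 ?S2"
      using elim(2) by (simp add: profiles_with_support_def)
    moreover have "?S1 \<noteq> {}" "?S2 \<noteq> {}"
      using elim(2) by (simp_all add: profiles_def strategy_support_nonempty)
    ultimately have "is_singleton ?S1" "is_singleton ?S2"
      using elim(1) by blast+
    with elim(2) show ?case
      by (rule in_pure_profiles_if_singleton_supports)
  qed
qed

lemma smwu_stationary_if_AE_pure_profiles:
  fixes A :: "real^'m::finite^'n::finite"
  assumes borel: "sets \<pi> = sets borel" and pure: "AE x in \<pi>. x \<in> pure_profiles"
  shows "smwu_stationary eta1 eta2 A \<pi>"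
  unfolding smwu_stationary_def
proof
  fix B :: "((real^'n) \<times> (real^'m)) set" assume "B \<in> sets borel"
  have "(\<integral>\<^sup>+x. ennreal (smwu_kernel eta1 eta2 A x B) \<partial>\<pi>) = (\<integral>\<^sup>+x. indicator B x \<partial>\<pi>)"
    using pure by (intro nn_integral_cong_AE) (auto elim!: eventually_mono simp: smwu_kernel_pure ennreal_indicator)
  then show "(\<integral>\<^sup>+x. ennreal (smwu_kernel eta1 eta2 A x B) \<partial>\<pi>) = emeasure \<pi> B"
    using \<open>B \<in> sets borel\<close> borel by simp
qed

theorem theorem7:
  fixes A :: "real^'m::finite^'n::finite"
    and eta1 eta2 :: real
    and \<pi> :: "((real^'n) \<times> (real^'m)) measure"
  assumes eta_pos: "eta1 > 0" "eta2 > 0"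
    and distinct_entries: "inj (\<lambda>(i, j). A$i$j)"
    and prob: "prob_space \<pi>"
    and borel: "sets \<pi> = sets borel"
    and on_X: "emeasure \<pi> profiles = 1"
  shows "smwu_stationary eta1 eta2 A \<pi> \<longleftrightarrow> emeasure \<pi> pure_profiles = 1"
proof -
  have AE_iff: "(AE x in \<pi>. x \<in> S) \<longleftrightarrow> emeasure \<pi> S = 1" if "S \<in> sets borel" for S
    using prob_space.AE_iff_emeasure_eq_1[OF prob, of "\<lambda>x. x \<in> S"] that borel
    by (simp add: sets_eq_imp_space_eq[OF borel])
  have "AE x in \<pi>. x \<in> profiles"
    using on_X by (simp add: AE_iff)
  then show ?thesis
    using AE_pure_profiles_if_smwu_stationary[OF eta_pos distinct_entries _ prob borel]
      smwu_stationary_if_AE_pure_profiles[OF borel]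
    by (auto simp: AE_iff pure_profiles_borel)
qed

end
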